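(* Let $A\in\mathbb{C}^{n\times n}$, and fix $A^-\in A\{1\}$ and $A^{GD}\in A\{GD\}$. For $X\in\mathbb{C}^{n\times n}$ the following are equivalent: (i) $X = A^{-}AA^{GD}$; (ii) $XAX=X$, $R(X)=R(A^{-}A)$, and $N(X)=N(AA^{GD})$; (iii) $XAX=X$, $XA=A^{-}A$, and $AX=AA^{GD}$.
   Context: For $A\in\mathbb{C}^{n\times n}$, $ind(A)$ is the smallest nonnegative integer $k$ with $\mathrm{rank}(A^k)=\mathrm{rank}(A^{k+1})$. $A\{1\}$ is the set of matrices $X$ with $AXA=A$. With $k=ind(A)$, $A\{GD\}$ is the set of G-Drazin inverses of $A$: matrices $X$ with $AXA=A$, $XA^{k+1}=A^k$, $A^{k+1}X=A^k$. $R(\cdot)$, $N(\cdot)$ denote range and null space. *)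

theory Defs
  imports "HOL-Analysis.Analysis"
begin

primrec matpow :: "'a::semiring_1^'n^'n \<Rightarrow> nat \<Rightarrow> 'a^'n^'n" where
  "matpow A 0 = mat 1"
| "matpow A (Suc k) = A ** matpow A k"

definition ind :: "'a::field^'n^'n \<Rightarrow> nat" where
  "ind A = (LEAST k. rank (matpow A k) = rank (matpow A (Suc k)))"

definition inner_inverses :: "'a::field^'n^'n \<Rightarrow> ('a^'n^'n) set" where
  "inner_inverses A = {X. A ** X ** A = A}"

definition gd_inverses :: "'a::field^'n^'n \<Rightarrow> ('a^'n^'n) set" where
  "gd_inverses A = {X. A ** X ** A = A
      \<and> X ** matpow A (Suc (ind A)) = matpow A (ind A)
      \<and> matpow A (Suc (ind A)) ** X = matpow A (ind A)}"

definition mat_range :: "'a::field^'n^'m \<Rightarrow> ('a^'m) set" where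
  "mat_range M = range (\<lambda>x. M *v x)"

definition mat_null :: "'a::field^'n^'m \<Rightarrow> ('a^'n) set" where
  "mat_null M = {x. M *v x = 0}"

end

theory Submission
  imports Defs
begin

text \<open>
  The identities \<open>XA = BA\<close>, \<open>AX = AC\<close> together with
  \<open>XAX = X\<close> force \<open>X = (XA)X = B(AX) = BAC\<close>. For an outer inverse \<open>X\<close> the range and null
  space of \<open>X\<close> are those of \<open>XA\<close> and \<open>AX\<close>, which gives (iii) \<open>\<Rightarrow>\<close> (ii). Conversely, \<open>XA\<close>
  fixes \<open>R(X) \<supseteq> R(BA)\<close>, so \<open>XA = X(ABA) = BA\<close>; and \<open>X\<close> kills \<open>N(AC)\<close>, which contains
  \<open>v - ACv\<close> because \<open>AC\<close> is idempotent, so \<open>X = XAC\<close> and \<open>AX = (AXA)C = AC\<close>.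
\<close>

lemma gd_inverses_subset_inner_inverses: "gd_inverses A \<subseteq> inner_inverses A"
  by (auto simp: gd_inverses_def inner_inverses_def)

lemma mat_range_mult_subset:
  fixes M :: "'a::field^'n^'m" and N :: "'a^'k^'n"
  shows "mat_range (M ** N) \<subseteq> mat_range M"
  unfolding mat_range_def by (auto simp: matrix_vector_mul_assoc[symmetric])

lemma mat_null_mult_subset:
  fixes M :: "'a::field^'n^'m" and N :: "'a^'k^'n"
  shows "mat_null N \<subseteq> mat_null (M ** N)"
  unfolding mat_null_def by (auto simp: matrix_vector_mul_assoc[symmetric])

lemma mult_eq_self_if_mat_range_subset:
  fixes P :: "'a::field^'k^'n" and X :: "'a^'l^'n" and Y :: "'a^'n^'n"
  assumes "mat_range P \<subseteq> mat_range X" and "Y ** X = X"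
  shows "Y ** P = P"
proof (rule iffD2[OF matrix_eq], rule allI)
  fix v
  obtain w where w: "P *v v = X *v w"
    using assms(1) unfolding mat_range_def by blast
  have "(Y ** P) *v v = (Y ** X) *v w"
    by (simp add: w flip: matrix_vector_mul_assoc)
  then show "(Y ** P) *v v = P *v v"
    by (simp add: assms(2) w)
qed

lemma mult_idempotent_eq_self_if_mat_null_subset:
  fixes P :: "'a::field^'n^'n" and X :: "'a^'n^'m"
  assumes "mat_null P \<subseteq> mat_null X" and "P ** P = P"
  shows "X ** P = X"
proof (rule iffD2[OF matrix_eq], rule allI)
  fix v
  have "v - P *v v \<in> mat_null P"
    using assms(2) by (simp add: mat_null_def matrix_vector_mult_diff_distrib matrix_vector_mul_assoc)
  then have "X *v (v - P *v v) = 0"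
    using assms(1) by (auto simp: mat_null_def)
  then show "(X ** P) *v v = X *v v"
    by (simp add: matrix_vector_mult_diff_distrib matrix_vector_mul_assoc)
qed

lemma outer_inverse_mat_range_mat_null:
  fixes A X :: "'a::field^'n^'n"
  assumes "X ** A ** X = X"
  shows "mat_range X = mat_range (X ** A)" and "mat_null X = mat_null (A ** X)"
proof -
  show "mat_range X = mat_range (X ** A)"
    using mat_range_mult_subset[of X A] mat_range_mult_subset[of "X ** A" X] assms by auto
  show "mat_null X = mat_null (A ** X)"
    using mat_null_mult_subset[of X A] mat_null_mult_subset[of "A ** X" X] assms
    by (auto simp: matrix_mul_assoc)
qed

context
  fixes A B C :: "'a::field^'n^'n"
  assumes B: "B \<in> inner_inverses A" and C: "C \<in> inner_inverses A"
begin

private lemma ABA: "A ** B ** A = A" and ACA: "A ** C ** A = A"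
  using B C by (simp_all add: inner_inverses_def)

lemma product_of_inner_inverses_iff_projections:
  "X = B ** A ** C \<longleftrightarrow> X ** A ** X = X \<and> X ** A = B ** A \<and> A ** X = A ** C"
proof
  assume X: "X = B ** A ** C"
  have "X ** A = B ** (A ** C ** A)"
    by (simp add: X matrix_mul_assoc)
  then have XA: "X ** A = B ** A"
    by (simp only: ACA)
  have "A ** X = (A ** B ** A) ** C"
    by (simp add: X matrix_mul_assoc)
  then have AX: "A ** X = A ** C"
    by (simp only: ABA)
  have "X ** A ** X = (B ** A) ** (B ** A ** C)"
    by (simp only: XA flip: X)
  also have "\<dots> = B ** (A ** B ** A) ** C"
    by (simp add: matrix_mul_assoc)
  also have "\<dots> = X"
    by (simp only: ABA X)
  finally show "X ** A ** X = X \<and> X ** A = B ** A \<and> A ** X = A ** C"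
    using XA AX by blast
next
  assume "X ** A ** X = X \<and> X ** A = B ** A \<and> A ** X = A ** C"
  then have XAX: "X ** A ** X = X" and XA: "X ** A = B ** A" and AX: "A ** X = A ** C"
    by blast+
  have "X = (X ** A) ** X"
    by (simp only: XAX)
  also have "\<dots> = B ** (A ** X)"
    by (simp only: XA matrix_mul_assoc)
  also have "\<dots> = B ** A ** C"
    by (simp only: AX matrix_mul_assoc)
  finally show "X = B ** A ** C" .
qed

lemma outer_inverse_range_null_iff_projections:
  assumes X: "X ** A ** X = X"
  shows "mat_range X = mat_range (B ** A) \<and> mat_null X = mat_null (A ** C)
     \<longleftrightarrow> X ** A = B ** A \<and> A ** X = A ** C"
proof
  assume range_null: "mat_range X = mat_range (B ** A) \<and> mat_null X = mat_null (A ** C)"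
  have "X ** A = X ** (A ** B ** A)"
    by (simp only: ABA)
  also have "\<dots> = (X ** A) ** (B ** A)"
    by (simp only: matrix_mul_assoc)
  also have "\<dots> = B ** A"
    using mult_eq_self_if_mat_range_subset[of "B ** A" X "X ** A"] range_null X by simp
  finally have XA: "X ** A = B ** A" .
  have "(A ** C) ** (A ** C) = A ** C"
    by (simp only: ACA matrix_mul_assoc)
  then have XAC: "X ** (A ** C) = X"
    using mult_idempotent_eq_self_if_mat_null_subset[of "A ** C" X] range_null by simp
  have "A ** X = A ** (X ** (A ** C))"
    by (simp only: XAC)
  also have "\<dots> = (A ** (X ** A)) ** C"
    by (simp only: matrix_mul_assoc)
  also have "\<dots> = A ** C"
    by (simp only: XA ABA matrix_mul_assoc)
  finally show "X ** A = B ** A \<and> A ** X = A ** C"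
    using XA by blast
next
  assume "X ** A = B ** A \<and> A ** X = A ** C"
  then show "mat_range X = mat_range (B ** A) \<and> mat_null X = mat_null (A ** C)"
    using outer_inverse_mat_range_mat_null[OF X] by simp
qed

end

theorem theorem3p7:
  fixes A Am Agd X :: "complex^'n^'n"
  assumes "Am \<in> inner_inverses A" and "Agd \<in> gd_inverses A"
  shows "(X = Am ** A ** Agd
           \<longleftrightarrow> (X ** A ** X = X \<and> mat_range X = mat_range (Am ** A)
                \<and> mat_null X = mat_null (A ** Agd)))
       \<and> (X = Am ** A ** Agd
           \<longleftrightarrow> (X ** A ** X = X \<and> X ** A = Am ** A \<and> A ** X = A ** Agd))"
proof -
  have Agd: "Agd \<in> inner_inverses A"
    using assms(2) gd_inverses_subset_inner_inverses by blast
  note i_iff_iii = product_of_inner_inverses_iff_projections[OF assms(1) Agd]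
  note ii_iff_iii = outer_inverse_range_null_iff_projections[OF assms(1) Agd]
  show ?thesis
    using i_iff_iii ii_iff_iii by blast
qed

end
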